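(* Let $(V,\mu)$ be a connected, locally finite weighted graph satisfying condition $(p_0)$, let $m>1$, and let $p,q\in\mathbb R$ with $p+q\ne m-1$. Let $p_1>1$ and let $\Omega\subset V$ be nonempty. Let $u:V\to(0,\infty)$ be non-constant and satisfy $$\Delta_m u(x)+u(x)^p|\nabla u(x)|^q\le0\quad\text{for all }x\in\Omega,$$ and $\frac{1}{p_1}\le\frac{u(x)}{u(y)}\le p_1$ for all $x\sim y$. If $\Omega\ne V$, assume moreover that $u(y)\ge u(x)$ whenever $x\in\Omega$, $y\in V\setminus\Omega$, $x\sim y$. Let $s,t>0$ satisfy $$\frac{mp+q+t(q-m)}{(m-1)p+t(q-m+1)}>1,\qquad \frac{p+q-t}{m-1-t}>1,\qquad s>\frac{mp+q+t(q-m)}{p+q-m+1},$$ and set $\theta=\frac{mp+q+t(q-m)}{p+q-m+1}$. Then there is a constant $C>0$ depending only on $p_0,p_1,m,p,q,s,t$ such that for every function $\varphi:V\to[0,1]$ with finite support contained in $\Omega$, $$\sum_{x\in\Omega}\mu(x)u(x)^{p-t}|\nabla u(x)|^q\varphi(x)^s\le C\Big(\sum_{\substack{x,y\in\Omega\\ \nabla_{xy}\varphi\ne0}}\mu_{xy}\varphi(x)^s u(x)^{p-t}|\nabla u(x)|^q\Big)^{\frac{m-1-t}{p+q-t}}\Big(\sum_{\substack{x,y\in\Omega\\ \nabla_{xy}\varphi\ne0}}\mu_{xy}|\nabla_{xy}\varphi|^{\theta}\Big)^{\frac{p+q-m+1}{p+q-t}},$$ and consequently $$\sum_{x\in\Omega}\mu(x)u(x)^{p-t}|\nabla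 u(x)|^q\varphi(x)^s\le C'\sum_{\substack{x,y\in\Omega\\ \nabla_{xy}\varphi\ne0}}\mu_{xy}|\nabla_{xy}\varphi|^{\theta},$$ for a constant $C'>0$ depending only on $p_0,p_1,m,p,q,s,t$.
   Context: $G=(V,E)$ is a connected, locally finite graph with no loops and no multiple edges; $x\sim y$ means adjacency. A weight is a symmetric function $\mu:V\times V\to[0,\infty)$ with $\mu_{xy}>0$ iff $x\sim y$; $\mu(x)=\sum_{y\sim x}\mu_{xy}$. $\Delta_m u(x)=\frac{1}{\mu(x)}\sum_{y\sim x}\mu_{xy}|u(y)-u(x)|^{m-2}(u(y)-u(x))$, $|\nabla u(x)|=\big(\sum_{y\sim x}\frac{\mu_{xy}}{2\mu(x)}(u(y)-u(x))^2\big)^{1/2}$, and $\nabla_{xy}f=f(y)-f(x)$. Condition $(p_0)$: there is $p_0>1$ with $\mu_{xy}/\mu(x)\ge1/p_0$ for all $x\sim y$. Conventions: $0^0=1$, $0^q=0$ for $q>0$, and for $q<0$, $|\nabla u(x)|^q=+\infty$ when $|\nabla u(x)|=0$ (so the hypothesized inequality forces $|\nabla u|>0$ on $\Omega$ in that case). *)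

theory Defs
  imports Complex_Main
begin

text \<open>A weighted graph on a vertex set V of natural numbers (every connected locally
finite graph is countable, so this loses no generality). Adjacency x ~ y means mu x y > 0.\<close>

definition adj :: "(nat \<Rightarrow> nat \<Rightarrow> real) \<Rightarrow> nat \<Rightarrow> nat \<Rightarrow> bool" where
  "adj \<mu> x y \<longleftrightarrow> 0 < \<mu> x y"

definition weighted_graph :: "nat set \<Rightarrow> (nat \<Rightarrow> nat \<Rightarrow> real) \<Rightarrow> bool" where
  "weighted_graph V \<mu> \<longleftrightarrow>
     (\<forall>x y. \<mu> x y = \<mu> y x) \<and> (\<forall>x y. 0 \<le> \<mu> x y) \<and>
     (\<forall>x y. adj \<mu> x y \<longrightarrow> x \<in> V \<and> y \<in> V \<and> x \<noteq> y) \<and>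
     (\<forall>x\<in>V. finite {y. adj \<mu> x y}) \<and>
     (\<forall>x\<in>V. \<forall>y\<in>V. (adj \<mu>)\<^sup>*\<^sup>* x y)"

definition wdeg :: "(nat \<Rightarrow> nat \<Rightarrow> real) \<Rightarrow> nat \<Rightarrow> real" where
  "wdeg \<mu> x = (\<Sum>y\<in>{y. adj \<mu> x y}. \<mu> x y)"

definition cond_p0 :: "(nat \<Rightarrow> nat \<Rightarrow> real) \<Rightarrow> real \<Rightarrow> bool" where
  "cond_p0 \<mu> p0 \<longleftrightarrow> p0 > 1 \<and> (\<forall>x y. adj \<mu> x y \<longrightarrow> \<mu> x y / wdeg \<mu> x \<ge> 1 / p0)"

text \<open>m-Laplacian; the term |d|^(m-2) d is 0 when d = 0 (0 powr _ = 0).\<close>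
definition mlap :: "real \<Rightarrow> (nat \<Rightarrow> nat \<Rightarrow> real) \<Rightarrow> (nat \<Rightarrow> real) \<Rightarrow> nat \<Rightarrow> real" where
  "mlap m \<mu> u x = (1 / wdeg \<mu> x) *
     (\<Sum>y\<in>{y. adj \<mu> x y}. \<mu> x y * (\<bar>u y - u x\<bar> powr (m - 2) * (u y - u x)))"

definition gradn :: "(nat \<Rightarrow> nat \<Rightarrow> real) \<Rightarrow> (nat \<Rightarrow> real) \<Rightarrow> nat \<Rightarrow> real" where
  "gradn \<mu> u x = sqrt (\<Sum>y\<in>{y. adj \<mu> x y}. \<mu> x y / (2 * wdeg \<mu> x) * (u y - u x)\<^sup>2)"

text \<open>Power with conventions 0^0 = 1, 0^a = 0 for a > 0 (for a < 0 the base is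
  forced positive by the hypotheses).\<close>
definition cpow :: "real \<Rightarrow> real \<Rightarrow> real" where
  "cpow x a = (if x = 0 then (if a = 0 then 1 else 0) else x powr a)"

end

theory Submission
  imports Defs "HOL-Analysis.Convex"
begin

text \<open>
  Test the inequality at every x \<in> \<Omega> with the function \<phi>(x)^s u(x)^(-t) and sum over \<Omega>.
  Summing by parts over the edges inside \<Omega>, the m-Laplacian produces a good term, which
  dominates |\<nabla>u|^m u^(-t-1) \<phi>^s because u^(-t) is decreasing and u changes by at most the
  factor p1 along an edge, and an error term living on the edges where \<phi> changes. Edges
  leaving \<Omega> only contribute good terms, since u does not decrease along them. A three-term
  Young inequality bounds the error on an edge by half of the good term, \<lambda> times the energy
  term and a multiple of \<lambda>^(-b/c) |\<nabla>\<phi>|^\<theta>. Optimising in \<lambda> gives the first estimate;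
  as the energy on the edges where \<phi> changes is at most the whole energy, it can be absorbed,
  which gives the second one.
\<close>

section \<open>Elementary inequalities\<close>

lemma Youngs_inequality_3:
  fixes x y z :: real
  assumes "0 \<le> a" "0 \<le> b" "0 \<le> c" "a + b + c = 1" "0 < x" "0 < y" "0 < z"
  shows "x powr a * y powr b * z powr c \<le> a * x + b * y + c * z"
proof (cases "b + c = 0")
  case True
  with assms have "b = 0" "c = 0" "a = 1" by auto
  with assms show ?thesis by simp
next
  case False
  define r where "r = b + c"
  have r: "0 < r" "a + r = 1" using False assms by (auto simp: r_def)
  define w where "w = (b / r) * y + (c / r) * z"
  have "0 < b * y + c * z"
  proof -
    have "0 < b \<or> 0 < c" using False assms by linarith
    then show ?thesis using assms by (auto intro: add_pos_nonneg add_nonneg_pos)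
  qed
  moreover have "w = (b * y + c * z) / r" by (simp add: w_def add_divide_distrib)
  ultimately have w: "0 < w" using r by simp
  have "b / r + c / r = 1"
    using r by (simp add: r_def flip: add_divide_distrib)
  then have "y powr (b / r) * z powr (c / r) \<le> w"
    unfolding w_def using r assms by (intro Youngs_inequality_0) auto
  then have "(y powr (b / r) * z powr (c / r)) powr r \<le> w powr r"
    using r by (intro powr_mono2) auto
  then have "y powr b * z powr c \<le> w powr r"
    using r assms by (simp add: powr_mult powr_powr)
  then have "x powr a * (y powr b * z powr c) \<le> x powr a * w powr r"
    by (intro mult_left_mono) auto
  also have "\<dots> \<le> a * x + r * w"
    using r assms w by (intro Youngs_inequality_0) auto
  also have "r * w = b * y + c * z"
    using r by (simp add: w_def field_simps)
  finally show ?thesis by (simp add: mult.assoc)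
qed

lemma powr_diff_le_ceiling:
  fixes x y s :: real
  assumes "0 \<le> y" "y < x" "x \<le> 1" "0 < s"
  shows "x powr s - y powr s \<le> real (nat \<lceil>s\<rceil>) * x powr (s - 1) * (x - y)"
proof -
  define n where "n = nat \<lceil>s\<rceil>"
  define r where "r = y / x"
  have x: "0 < x" using assms by simp
  have r: "0 \<le> r" "r < 1" using assms x unfolding r_def by (auto simp: field_simps)
  have "r ^ n \<le> r powr s"
  proof (cases "r = 0")
    case True
    have "0 < n" using assms by (simp add: n_def)
    then show ?thesis using True by (simp add: zero_power)
  next
    case False
    have "r powr real n \<le> r powr s"
      using r by (intro powr_mono') (auto simp: n_def intro: real_nat_ceiling_ge)
    then show ?thesis using False r by (simp add: powr_realpow)
  qed
  moreover have "1 + real n * (r - 1) \<le> r ^ n"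
    using Bernoulli_inequality[of "r - 1" n] r by simp
  ultimately have Bernoulli: "1 - r powr s \<le> real n * (1 - r)" by (simp add: algebra_simps)
  have "x powr s - y powr s = x powr s * (1 - r powr s)"
    using x r by (simp add: r_def powr_divide field_simps)
  also have "\<dots> \<le> x powr s * (real n * (1 - r))"
    using Bernoulli by (simp add: mult_left_mono)
  also have "\<dots> = real n * (x powr s / x) * (x - y)"
    using x by (simp add: r_def field_simps)
  also have "x powr s / x = x powr (s - 1)"
    using x by (simp add: powr_diff)
  finally show ?thesis unfolding n_def .
qed

lemma powr_neg_diff_ge:
  fixes x y t :: real
  assumes "0 < x" "x < y" "0 < t"
  shows "t * y powr (-t-1) * (y - x) \<le> x powr -t - y powr -t"
proof -
  have der: "\<And>z. x \<le> z \<Longrightarrow> z \<le> y \<Longrightarrow>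
      ((\<lambda>z. z powr -t) has_real_derivative -t * z powr (-t - 1)) (at z)"
    using assms by (intro has_real_derivative_powr) auto
  obtain z where z: "x < z" "z < y"
    and mvt: "y powr -t - x powr -t = (y - x) * (-t * z powr (-t - 1))"
    using MVT2[OF \<open>x < y\<close> der] by blast
  have "y powr (-t-1) \<le> z powr (-t-1)"
    using z assms by (intro powr_mono2') auto
  then have "t * (y - x) * y powr (-t-1) \<le> t * (y - x) * z powr (-t-1)"
    using assms by (intro mult_left_mono) auto
  then show ?thesis using mvt by (simp add: algebra_simps)
qed

lemma abs_diff_powr_neg_ge:
  fixes a b P t :: real
  assumes "0 < a" "0 < b" "b \<le> P * a" "1 \<le> P" "0 < t"
  shows "t * P powr (-t-1) * \<bar>b - a\<bar> * a powr (-t-1) \<le> \<bar>b powr -t - a powr -t\<bar>"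
proof (cases "a < b")
  case True
  have "t * P powr (-t-1) * \<bar>b - a\<bar> * a powr (-t-1) = t * (P * a) powr (-t-1) * (b - a)"
    using True assms by (simp add: powr_mult)
  also have "\<dots> \<le> t * b powr (-t-1) * (b - a)"
    using True assms by (intro mult_right_mono mult_left_mono powr_mono2') auto
  also have "\<dots> \<le> \<bar>b powr -t - a powr -t\<bar>"
    using powr_neg_diff_ge[of a b t] True assms by simp
  finally show ?thesis .
next
  case False
  have "P powr (-t-1) \<le> 1"
    using powr_mono[of "-t-1" 0 P] assms by simp
  then have "P powr (-t-1) * (t * a powr (-t-1) * (a - b)) \<le> t * a powr (-t-1) * (a - b)"
    using False assms by (intro mult_left_le_one_le) auto
  then have "t * P powr (-t-1) * \<bar>b - a\<bar> * a powr (-t-1) \<le> t * a powr (-t-1) * (a - b)"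
    using False by (simp add: algebra_simps)
  also have "\<dots> \<le> \<bar>b powr -t - a powr -t\<bar>"
    using powr_neg_diff_ge[of b a t] False assms by (cases "a = b") auto
  finally show ?thesis .
qed

lemma abs_powr_mult_sgn:
  fixes d r :: real
  shows "\<bar>d\<bar> powr (r - 1) * d = sgn d * \<bar>d\<bar> powr r"
proof -
  have "\<bar>d\<bar> powr (r - 1) * d = sgn d * (\<bar>d\<bar> * \<bar>d\<bar> powr (r - 1))"
    by (metis sgn_mult_abs mult.commute mult.left_commute)
  then show ?thesis using powr_mult_base[of "\<bar>d\<bar>" "r - 1"] by simp
qed

text \<open>
  One edge of the summation by parts: the flux \<sigma> * H (with \<sigma> the sign of B - A) is tested with
  F1 * A at one endpoint and F2 * B at the other, where B and A lie within the factor P.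
\<close>

lemma pair_flux_bound:
  fixes \<mu> H \<sigma> A B F1 F2 P :: real
  assumes "0 \<le> \<mu>" "0 \<le> H" "\<sigma> * (B - A) = - \<bar>B - A\<bar>" "\<bar>\<sigma>\<bar> \<le> 1"
    and "0 \<le> A" "B \<le> P * A" "A \<le> P * B" "1 \<le> P"
  shows "\<mu> * H * \<sigma> * (F2 * B - F1 * A) \<le> - \<mu> * H * \<bar>B - A\<bar> * (F1 + F2) / 2
           + (if F2 < F1 then \<mu> * H * (F1 - F2) * P * A else 0)
           + (if F1 < F2 then \<mu> * H * (F2 - F1) * P * B else 0)"
proof -
  have "0 \<le> P * B" using assms by linarith
  then have B: "0 \<le> B" using assms by (simp add: zero_le_mult_iff)
  have "\<sigma> * (F2 - F1) \<le> \<bar>F2 - F1\<bar>"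
    using assms abs_le_D1 abs_mult mult_left_le_one_le by (metis abs_ge_zero)
  then have "\<sigma> * (F2 - F1) * ((A + B) / 2) \<le> \<bar>F2 - F1\<bar> * ((A + B) / 2)"
    using B assms by (intro mult_right_mono) auto
  also have "\<dots> \<le> (if F2 < F1 then (F1 - F2) * P * A else 0) + (if F1 < F2 then (F2 - F1) * P * B else 0)"
  proof -
    have "A \<le> P * A" "B \<le> P * B"
      using mult_right_mono[of 1 P A] mult_right_mono[of 1 P B] assms B by auto
    then have "(A + B) / 2 \<le> P * A" "(A + B) / 2 \<le> P * B"
      using assms by auto
    then show ?thesis by (auto simp: mult.assoc intro: mult_left_mono)
  qed
  finally have cross: "\<sigma> * (F2 - F1) * ((A + B) / 2)
      \<le> (if F2 < F1 then (F1 - F2) * P * A else 0) + (if F1 < F2 then (F2 - F1) * P * B else 0)" .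
  \<comment> \<open>the part symmetric in the two endpoints is \<open>\<le> 0\<close>; only the antisymmetric part can be positive\<close>
  have "\<sigma> * (F2 * B - F1 * A) = (F1 + F2) / 2 * (\<sigma> * (B - A)) + \<sigma> * (F2 - F1) * ((A + B) / 2)"
    by (simp add: field_simps)
  also have "\<dots> = - \<bar>B - A\<bar> * (F1 + F2) / 2 + \<sigma> * (F2 - F1) * ((A + B) / 2)"
    using assms(3) by simp
  finally have "\<mu> * H * (\<sigma> * (F2 * B - F1 * A)) \<le> \<mu> * H * (- \<bar>B - A\<bar> * (F1 + F2) / 2
      + ((if F2 < F1 then (F1 - F2) * P * A else 0) + (if F1 < F2 then (F2 - F1) * P * B else 0)))"
    using cross assms by (intro mult_left_mono) auto
  then show ?thesis by (cases "F2 < F1"; cases "F1 < F2") (simp_all add: algebra_simps)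
qed

lemma nonpos_of_le_scalings:
  fixes L A B P1 P2 b c :: real
  assumes "A = 0 \<or> B = 0" "0 < b" "0 < c"
    and bound: "\<And>\<kappa>. 0 < \<kappa> \<Longrightarrow> L \<le> P1 * \<kappa> * A + P2 * \<kappa> powr (-b/c) * B"
  shows "L \<le> 0"
proof (cases "A = 0")
  case True
  have "((\<lambda>\<kappa>. P2 * \<kappa> powr (-b/c) * B) \<longlongrightarrow> P2 * 0 * B) at_top"
    using assms by (intro tendsto_intros tendsto_neg_powr filterlim_ident) auto
  moreover have "\<forall>\<^sub>F \<kappa> in at_top. L \<le> P2 * \<kappa> powr (-b/c) * B"
    using eventually_gt_at_top[of 0] by eventually_elim (use bound True in auto)
  ultimately show "L \<le> 0" by (intro tendsto_lowerbound) auto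
next
  case False
  then have "B = 0" using assms(1) by auto
  have "((\<lambda>\<kappa>. P1 * \<kappa> * A) \<longlongrightarrow> P1 * 0 * A) (at_right 0)"
    by (intro tendsto_intros)
  moreover have "\<forall>\<^sub>F \<kappa> in at_right 0. L \<le> P1 * \<kappa> * A"
    using eventually_at_right_less[of 0] by eventually_elim (use bound \<open>B = 0\<close> in auto)
  ultimately show "L \<le> 0" by (intro tendsto_lowerbound) auto
qed

lemma le_optimal_scaling:
  fixes L A B P1 P2 b c :: real
  assumes "0 \<le> A" "0 \<le> B" "0 < b" "0 < c"
    and bound: "\<And>\<kappa>. 0 < \<kappa> \<Longrightarrow> L \<le> P1 * \<kappa> * A + P2 * \<kappa> powr (-b/c) * B"
  shows "L \<le> (P1 + P2) * A powr (b/(b+c)) * B powr (c/(b+c))"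
proof (cases "0 < A \<and> 0 < B")
  case True
  define \<gamma> where "\<gamma> = c/(b+c)"
  have \<gamma>: "1 - \<gamma> = b/(b+c)" "\<gamma> * b / c = b/(b+c)"
    using assms by (simp add: \<gamma>_def field_simps, simp add: \<gamma>_def)
  define \<kappa> where "\<kappa> = (B / A) powr \<gamma>"
  have \<kappa>: "0 < \<kappa>" using True by (simp add: \<kappa>_def)
  have scaled_A: "\<kappa> * A = A powr (b/(b+c)) * B powr (c/(b+c))"
    using True by (simp add: \<kappa>_def \<gamma>_def[symmetric] \<gamma>(1)[symmetric] powr_divide powr_diff)
  have "\<kappa> powr (-b/c) = A powr (b/(b+c)) / B powr (b/(b+c))"
    using True by (simp add: \<kappa>_def powr_powr \<gamma>(2) powr_minus_divide powr_divide)
  moreover have "B powr (c/(b+c)) = B / B powr (b/(b+c))"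
    using True by (simp add: \<gamma>_def[symmetric] \<gamma>(1)[symmetric] powr_diff)
  ultimately have scaled_B: "\<kappa> powr (-b/c) * B = A powr (b/(b+c)) * B powr (c/(b+c))"
    by simp
  have "L \<le> P1 * (\<kappa> * A) + P2 * (\<kappa> powr (-b/c) * B)"
    using bound[OF \<kappa>] by (simp add: mult.assoc)
  then show ?thesis
    unfolding scaled_A scaled_B by (simp add: algebra_simps)
next
  case False
  then have "A = 0 \<or> B = 0" using assms by auto
  with nonpos_of_le_scalings[OF _ assms(3,4) bound] assms(3,4) show ?thesis by auto
qed

lemma absorb_interpolation_bound:
  fixes L A B C \<alpha> :: real
  assumes "0 \<le> A" "A \<le> L" "0 \<le> B" "0 < C" "0 < \<alpha>" "\<alpha> < 1"
    and bound: "L \<le> C * A powr \<alpha> * B powr (1 - \<alpha>)"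
  shows "L \<le> C powr (1 / (1 - \<alpha>)) * B"
proof (cases "L = 0")
  case True
  then show ?thesis using assms by simp
next
  case False
  then have L: "0 < L" using assms by simp
  have "L powr \<alpha> * L powr (1 - \<alpha>) = L"
    using L by (simp flip: powr_add)
  also have "L \<le> C * L powr \<alpha> * B powr (1 - \<alpha>)"
    using bound assms powr_mono2[of \<alpha> A L] by (smt (verit) mult_left_mono mult_right_mono powr_ge_zero)
  finally have "L powr (1 - \<alpha>) \<le> C * B powr (1 - \<alpha>)"
    using L by (simp add: algebra_simps)
  then have "(L powr (1 - \<alpha>)) powr (1 / (1 - \<alpha>)) \<le> (C * B powr (1 - \<alpha>)) powr (1 / (1 - \<alpha>))"
    using assms by (intro powr_mono2) auto
  then show ?thesis
    using assms L by (simp add: powr_mult powr_powr)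
qed

text \<open>
  Exponents of the Young inequality applied to the error term |\<nabla>u|^(m-1) u^(-t) \<phi>^(s(1-c)) |\<nabla>\<phi>|
  of an edge: a goes with |\<nabla>u|^m u^(-t-1) \<phi>^s, b with \<phi>^s u^(p-t) |\<nabla>u|^q and c with |\<nabla>\<phi>|^\<theta>.
  The linear relations say that the weighted product of these three is the error term.
\<close>

definition young_exponents ::
    "real \<Rightarrow> real \<Rightarrow> real \<Rightarrow> real \<Rightarrow> real \<Rightarrow> real \<Rightarrow> real \<Rightarrow> real \<Rightarrow> real \<Rightarrow> bool"
  where "young_exponents m p q s t a b c \<theta> \<longleftrightarrow>
    0 < a \<and> 0 < b \<and> 0 < c \<and> a + b + c = 1 \<and> m * a + q * b = m - 1 \<and>
    (p - t) * b - (t + 1) * a = - t \<and> \<theta> * c = 1 \<and> 1 \<le> s * c"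

lemma young_exponents_explicit:
  fixes m p q s t :: real
  defines "N \<equiv> m * p + q + t * (q - m)" and "D \<equiv> (m - 1) * p + t * (q - m + 1)"
    and "M \<equiv> m - 1 - t" and "P \<equiv> p + q - t"
  assumes pos: "0 < D / N" "0 < M / N" "0 < (P - M) / N" and "N / (P - M) < s"
  shows "young_exponents m p q s t (D / N) (M / N) ((P - M) / N) (N / (P - M))"
proof -
  have N: "N \<noteq> 0" and "P - M \<noteq> 0" using pos by auto
  have "D + P = N"
    by (simp add: N_def D_def P_def algebra_simps)
  then have "D / N + M / N + (P - M) / N = 1"
    using N by (simp add: field_simps)
  moreover have "m * D + q * M = (m - 1) * N"
    by (simp add: N_def D_def M_def algebra_simps)
  then have "m * (D / N) + q * (M / N) = m - 1"
    using N by (simp flip: add_divide_distrib)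
  moreover have "(p - t) * M - (t + 1) * D = - t * N"
    by (simp add: N_def D_def M_def algebra_simps)
  then have "(p - t) * (M / N) - (t + 1) * (D / N) = - t"
    using N by (simp flip: diff_divide_distrib)
  moreover have "1 \<le> s * ((P - M) / N)"
  proof -
    have "N / (P - M) * ((P - M) / N) = 1" using N \<open>P - M \<noteq> 0\<close> by simp
    then show ?thesis using mult_strict_right_mono[OF assms(8) pos(3)] by linarith
  qed
  ultimately show ?thesis
    using pos N \<open>P - M \<noteq> 0\<close> by (simp add: young_exponents_def)
qed

lemma inverse_ratio_bounds:
  fixes x y :: real
  assumes "1 < x / y"
  shows "0 < y / x" "y / x < 1"
  using assms
  by (metis divide_pos_pos less_trans zero_less_one inverse_divide inverse_positive_iff_positive)
     (metis assms inverse_divide inverse_less_1_iff not_le)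

lemma young_exponents_exist:
  fixes m p q s t :: real
  assumes "1 < (m * p + q + t * (q - m)) / ((m - 1) * p + t * (q - m + 1))"
    and "1 < (p + q - t) / (m - 1 - t)"
    and "(m * p + q + t * (q - m)) / (p + q - m + 1) < s"
  obtains a b c where "young_exponents m p q s t a b c ((m * p + q + t * (q - m)) / (p + q - m + 1))"
    and "(m - 1 - t) / (p + q - t) = b / (b + c)" "(p + q - m + 1) / (p + q - t) = c / (b + c)"
proof -
  define N D M P where "N = m * p + q + t * (q - m)" and "D = (m - 1) * p + t * (q - m + 1)"
    and "M = m - 1 - t" and "P = p + q - t"
  have PM: "p + q - m + 1 = P - M" by (simp add: M_def P_def)
  have D: "0 < D / N" "D / N < 1" and M: "0 < M / P" "M / P < 1"
    using inverse_ratio_bounds assms(1,2) by (auto simp: N_def D_def M_def P_def)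
  have N: "N \<noteq> 0" and "P \<noteq> 0" using D M by auto
  have PN: "P / N = 1 - D / N"
    using N by (simp add: N_def D_def P_def field_simps)
  have b: "M / N = M / P * (P / N)" and c: "(P - M) / N = (1 - M / P) * (P / N)"
    using N \<open>P \<noteq> 0\<close> by (simp_all add: field_simps)
  have pos: "0 < M / N" "0 < (P - M) / N"
    unfolding b c PN using D M by (intro mult_pos_pos; simp)+
  have Y: "young_exponents m p q s t (D / N) (M / N) ((P - M) / N) (N / (P - M))"
    using young_exponents_explicit[where m=m and p=p and q=q and s=s and t=t, folded N_def D_def M_def P_def]
      D(1) pos assms(3)[unfolded PM, folded N_def]
    by blast
  have sum: "M / N + (P - M) / N = P / N"
    by (simp flip: add_divide_distrib)
  show ?thesis
  proof (rule that[of "D / N" "M / N" "(P - M) / N"])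
    show "young_exponents m p q s t (D / N) (M / N) ((P - M) / N)
        ((m * p + q + t * (q - m)) / (p + q - m + 1))"
      using Y by (simp add: PM N_def)
    show "(m - 1 - t) / (p + q - t) = M / N / (M / N + (P - M) / N)"
      "(p + q - m + 1) / (p + q - t) = (P - M) / N / (M / N + (P - M) / N)"
      unfolding sum PM M_def[symmetric] P_def[symmetric] using N by simp_all
  qed
qed

lemma young_exponents_product_le:
  assumes exps: "young_exponents m p q s t a b c \<theta>"
    and pos: "0 < e" "0 < \<kappa>" "0 < g" "0 < v" "0 < f" "0 < d"
  shows "g powr (m - 1) * v powr -t * f powr (s * (1 - c)) * d
    \<le> a * e * (g powr m * v powr (-t - 1) * f powr s) + b * \<kappa> * (f powr s * v powr (p - t) * g powr q)
      + c * e powr (-a/c) * \<kappa> powr (-b/c) * d powr \<theta>"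
proof -
  have abc: "0 < a" "0 < b" "0 < c" "a + b + c = 1" "m * a + q * b = m - 1"
    "(p - t) * b - (t + 1) * a = - t" "\<theta> * c = 1"
    using exps by (simp_all add: young_exponents_def)
  define X Y Z where "X = e * (g powr m * v powr (-t - 1) * f powr s)"
    and "Y = \<kappa> * (f powr s * v powr (p - t) * g powr q)"
    and "Z = e powr (-a/c) * \<kappa> powr (-b/c) * d powr \<theta>"
  have XYZ: "0 < X" "0 < Y" "0 < Z" using pos by (simp_all add: X_def Y_def Z_def)
  have "ln (X powr a * Y powr b * Z powr c) = a * ln X + b * ln Y + c * ln Z"
    using XYZ by (simp add: ln_mult ln_powr)
  also have "\<dots> = (m * a + q * b) * ln g + ((p - t) * b - (t + 1) * a) * ln v + s * (a + b) * ln f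
      + (\<theta> * c) * ln d"
    using pos abc(3) by (simp add: X_def Y_def Z_def ln_mult ln_powr field_simps)
  also have "\<dots> = ln (g powr (m - 1) * v powr -t * f powr (s * (1 - c)) * d)"
    using pos abc by (simp add: ln_mult ln_powr)
  finally have "X powr a * Y powr b * Z powr c = g powr (m - 1) * v powr -t * f powr (s * (1 - c)) * d"
    using XYZ pos by (simp add: ln_inj_iff)
  moreover have "X powr a * Y powr b * Z powr c \<le> a * X + b * Y + c * Z"
    using abc XYZ by (intro Youngs_inequality_3) auto
  ultimately show ?thesis by (simp add: X_def Y_def Z_def mult.assoc)
qed

lemma sum_swap_le:
  fixes F G :: "'a \<Rightarrow> 'a \<Rightarrow> 'b::linordered_ab_group_add"
  assumes "finite R" and sym: "\<And>x y. (x, y) \<in> R \<Longrightarrow> (y, x) \<in> R"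
    and pair: "\<And>x y. (x, y) \<in> R \<Longrightarrow> F x y + F y x \<le> G x y + G y x"
  shows "(\<Sum>(x, y)\<in>R. F x y) \<le> (\<Sum>(x, y)\<in>R. G x y)"
proof -
  have swap: "(\<Sum>(x, y)\<in>R. H y x) = (\<Sum>(x, y)\<in>R. H x y)" for H :: "'a \<Rightarrow> 'a \<Rightarrow> 'b"
    by (rule sum.reindex_bij_witness[of _ prod.swap prod.swap]) (auto intro: sym)
  have "(\<Sum>(x, y)\<in>R. F x y) + (\<Sum>(x, y)\<in>R. F x y) = (\<Sum>(x, y)\<in>R. F x y) + (\<Sum>(x, y)\<in>R. F y x)"
    by (simp add: swap[of F])
  also have "\<dots> = (\<Sum>(x, y)\<in>R. F x y + F y x)"
    by (simp add: split_def sum.distrib)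
  also have "\<dots> \<le> (\<Sum>(x, y)\<in>R. G x y + G y x)"
    using pair by (intro sum_mono) auto
  also have "\<dots> = (\<Sum>(x, y)\<in>R. G x y) + (\<Sum>(x, y)\<in>R. G y x)"
    by (simp add: split_def sum.distrib)
  also have "\<dots> = (\<Sum>(x, y)\<in>R. G x y) + (\<Sum>(x, y)\<in>R. G x y)"
    by (simp add: swap[of G])
  finally have double: "(\<Sum>(x, y)\<in>R. F x y) + (\<Sum>(x, y)\<in>R. F x y)
      \<le> (\<Sum>(x, y)\<in>R. G x y) + (\<Sum>(x, y)\<in>R. G x y)" .
  show ?thesis
  proof (rule ccontr)
    assume "\<not> ?thesis"
    then have "(\<Sum>(x, y)\<in>R. G x y) + (\<Sum>(x, y)\<in>R. G x y)
        < (\<Sum>(x, y)\<in>R. F x y) + (\<Sum>(x, y)\<in>R. F x y)"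
      by (intro add_strict_mono) auto
    with double show False by simp
  qed
qed

lemma sum_Sigma_extend:
  assumes "finite D" "finite S" "\<And>x. x \<in> S \<Longrightarrow> finite (T x)" "Sigma S T \<subseteq> D"
    and "\<And>x y. (x, y) \<in> D - Sigma S T \<Longrightarrow> F x y = 0"
  shows "(\<Sum>x\<in>S. \<Sum>y\<in>T x. F x y) = (\<Sum>(x, y)\<in>D. F x y)"
proof -
  have "(\<Sum>x\<in>S. \<Sum>y\<in>T x. F x y) = (\<Sum>(x, y)\<in>Sigma S T. F x y)"
    by (rule sum.Sigma) (use assms(2,3) in auto)
  also have "\<dots> = (\<Sum>(x, y)\<in>D. F x y)"
    using assms(1,4,5) by (intro sum.mono_neutral_left) auto
  finally show ?thesis .
qed

section \<open>Weighted graphs\<close>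

abbreviation nbrs :: "(nat \<Rightarrow> nat \<Rightarrow> real) \<Rightarrow> nat \<Rightarrow> nat set"
  where "nbrs \<mu> x \<equiv> {y. adj \<mu> x y}"

lemma weighted_graph_nonneg: "weighted_graph V \<mu> \<Longrightarrow> 0 \<le> \<mu> x y"
  by (simp add: weighted_graph_def)

lemma weighted_graph_sym: "weighted_graph V \<mu> \<Longrightarrow> \<mu> x y = \<mu> y x"
  by (simp add: weighted_graph_def)

lemma weighted_graph_adj_sym: "weighted_graph V \<mu> \<Longrightarrow> adj \<mu> x y \<Longrightarrow> adj \<mu> y x"
  by (simp add: adj_def weighted_graph_def)

lemma weighted_graph_adjD: "weighted_graph V \<mu> \<Longrightarrow> adj \<mu> x y \<Longrightarrow> x \<in> V \<and> y \<in> V"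
  by (simp add: weighted_graph_def)

lemma finite_nbrs:
  assumes "weighted_graph V \<mu>"
  shows "finite (nbrs \<mu> x)"
proof (cases "x \<in> V")
  case False
  then have "nbrs \<mu> x = {}" using weighted_graph_adjD[OF assms] by auto
  then show ?thesis by simp
qed (use assms in \<open>simp add: weighted_graph_def\<close>)

lemma sum_nbrs_le_wdeg:
  assumes "weighted_graph V \<mu>" "T \<subseteq> nbrs \<mu> x"
  shows "(\<Sum>y\<in>T. \<mu> x y) \<le> wdeg \<mu> x"
  unfolding wdeg_def using assms finite_nbrs weighted_graph_nonneg by (intro sum_mono2) auto

lemma wdeg_nonneg: "weighted_graph V \<mu> \<Longrightarrow> 0 \<le> wdeg \<mu> x"
  using sum_nbrs_le_wdeg[of V \<mu> "{}"] by simp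

lemma wdeg_pos: "weighted_graph V \<mu> \<Longrightarrow> adj \<mu> x y \<Longrightarrow> 0 < wdeg \<mu> x"
  using sum_nbrs_le_wdeg[of V \<mu> "{y}" x] by (simp add: adj_def)

lemma wdeg_mult_mlap:
  assumes "weighted_graph V \<mu>"
  shows "wdeg \<mu> x * mlap m \<mu> u x
    = (\<Sum>y\<in>nbrs \<mu> x. \<mu> x y * (\<bar>u y - u x\<bar> powr (m - 2) * (u y - u x)))"
proof (cases "nbrs \<mu> x = {}")
  case False
  then have "wdeg \<mu> x \<noteq> 0" using wdeg_pos[OF assms] by fastforce
  then show ?thesis by (simp add: mlap_def)
qed (simp add: mlap_def)

lemma gradn_squared:
  assumes "weighted_graph V \<mu>"
  shows "(gradn \<mu> u x)\<^sup>2 = (\<Sum>y\<in>nbrs \<mu> x. \<mu> x y / (2 * wdeg \<mu> x) * (u y - u x)\<^sup>2)"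
proof -
  have "0 \<le> (\<Sum>y\<in>nbrs \<mu> x. \<mu> x y / (2 * wdeg \<mu> x) * (u y - u x)\<^sup>2)"
    using weighted_graph_nonneg[OF assms] wdeg_nonneg[OF assms] by (intro sum_nonneg) auto
  then show ?thesis by (simp add: gradn_def)
qed

lemma gradn_nonneg:
  assumes "weighted_graph V \<mu>"
  shows "0 \<le> gradn \<mu> u x"
  unfolding gradn_def
  by (intro real_sqrt_ge_zero sum_nonneg) (use weighted_graph_nonneg[OF assms] wdeg_nonneg[OF assms] in auto)

lemma cpow_nonneg: "0 \<le> x \<Longrightarrow> 0 \<le> cpow x a"
  by (simp add: cpow_def)

lemma cpow_pos: "0 < x \<Longrightarrow> cpow x a = x powr a"
  by (simp add: cpow_def)

lemma abs_diff_le_gradn: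
  assumes "weighted_graph V \<mu>" "cond_p0 \<mu> p0" "adj \<mu> x y"
  shows "\<bar>u y - u x\<bar> \<le> sqrt (2 * p0) * gradn \<mu> u x"
proof -
  have p0: "1 < p0" "1 / p0 \<le> \<mu> x y / wdeg \<mu> x"
    using assms(2,3) by (auto simp: cond_p0_def)
  have "1 / (2 * p0) \<le> \<mu> x y / (2 * wdeg \<mu> x)"
    using divide_right_mono[OF p0(2), of 2] by simp
  then have "1 / (2 * p0) * (u y - u x)\<^sup>2 \<le> \<mu> x y / (2 * wdeg \<mu> x) * (u y - u x)\<^sup>2"
    by (rule mult_right_mono) simp
  then have "(u y - u x)\<^sup>2 / (2 * p0) \<le> \<mu> x y / (2 * wdeg \<mu> x) * (u y - u x)\<^sup>2"
    by simp
  also have "\<dots> \<le> (gradn \<mu> u x)\<^sup>2"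
    unfolding gradn_squared[OF assms(1)]
    using assms(3) finite_nbrs[OF assms(1)] weighted_graph_nonneg[OF assms(1)] wdeg_nonneg[OF assms(1)]
    by (intro member_le_sum) auto
  finally have "(u y - u x)\<^sup>2 \<le> 2 * p0 * (gradn \<mu> u x)\<^sup>2"
    using p0 by (simp add: pos_divide_le_eq mult.commute)
  also have "\<dots> = (sqrt (2 * p0) * gradn \<mu> u x)\<^sup>2"
    using p0 by (simp add: power_mult_distrib)
  finally have "(u y - u x)\<^sup>2 \<le> (sqrt (2 * p0) * gradn \<mu> u x)\<^sup>2" .
  then show ?thesis
    using power2_le_imp_le[of "\<bar>u y - u x\<bar>" "sqrt (2 * p0) * gradn \<mu> u x"]
      gradn_nonneg[OF assms(1), of u x] p0
    by simp
qed

lemma gradn_le_abs_diff: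
  assumes "weighted_graph V \<mu>" "nbrs \<mu> x \<noteq> {}"
  obtains y where "adj \<mu> x y" "gradn \<mu> u x \<le> \<bar>u y - u x\<bar>"
proof -
  define M where "M = Max ((\<lambda>y. \<bar>u y - u x\<bar>) ` nbrs \<mu> x)"
  have fin: "finite (nbrs \<mu> x)" using finite_nbrs[OF assms(1)] .
  have "M \<in> (\<lambda>y. \<bar>u y - u x\<bar>) ` nbrs \<mu> x"
    unfolding M_def using fin assms(2) by (intro Max_in) auto
  then obtain y where y: "adj \<mu> x y" "\<bar>u y - u x\<bar> = M" by auto
  have "(gradn \<mu> u x)\<^sup>2 \<le> (\<Sum>z\<in>nbrs \<mu> x. \<mu> x z / (2 * wdeg \<mu> x) * M\<^sup>2)"
    unfolding gradn_squared[OF assms(1)]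
  proof (intro sum_mono mult_left_mono)
    fix z assume "z \<in> nbrs \<mu> x"
    then have "\<bar>u z - u x\<bar> \<le> M" unfolding M_def using fin by auto
    then show "(u z - u x)\<^sup>2 \<le> M\<^sup>2"
      using power_mono[of "\<bar>u z - u x\<bar>" M 2] by simp
  qed (use weighted_graph_nonneg[OF assms(1)] wdeg_nonneg[OF assms(1)] in auto)
  also have "\<dots> = wdeg \<mu> x * (M\<^sup>2 / (2 * wdeg \<mu> x))"
    unfolding wdeg_def by (simp add: sum_distrib_right sum_divide_distrib)
  also have "\<dots> = M\<^sup>2 / 2"
    using wdeg_pos[OF assms(1) y(1)] by simp
  also have "\<dots> \<le> M\<^sup>2" by simp
  finally have "gradn \<mu> u x \<le> M"
    using power2_le_imp_le[of "gradn \<mu> u x" M] y(2) abs_ge_zero[of "u y - u x"] by simp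
  with y show ?thesis using that by simp
qed

lemma wdeg_gradn_powr_le:
  assumes "weighted_graph V \<mu>" "cond_p0 \<mu> p0" "0 \<le> m"
  shows "wdeg \<mu> x / p0 * gradn \<mu> u x powr m \<le> (\<Sum>y\<in>nbrs \<mu> x. \<mu> x y * \<bar>u y - u x\<bar> powr m)"
proof (cases "nbrs \<mu> x = {}")
  case True
  then show ?thesis by (simp add: wdeg_def)
next
  case False
  then obtain y where y: "adj \<mu> x y" "gradn \<mu> u x \<le> \<bar>u y - u x\<bar>"
    using gradn_le_abs_diff[OF assms(1)] by blast
  have "1 / p0 \<le> \<mu> x y / wdeg \<mu> x" "1 < p0"
    using assms(2) y(1) by (auto simp: cond_p0_def)
  then have "wdeg \<mu> x / p0 \<le> \<mu> x y"
    using wdeg_pos[OF assms(1) y(1)] by (simp add: field_simps)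
  moreover have "gradn \<mu> u x powr m \<le> \<bar>u y - u x\<bar> powr m"
    using y(2) gradn_nonneg[OF assms(1)] assms(3) by (intro powr_mono2) auto
  ultimately have "wdeg \<mu> x / p0 * gradn \<mu> u x powr m \<le> \<mu> x y * \<bar>u y - u x\<bar> powr m"
    using assms(2) wdeg_nonneg[OF assms(1)] weighted_graph_nonneg[OF assms(1)]
    by (intro mult_mono) (auto simp: cond_p0_def)
  also have "\<dots> \<le> (\<Sum>y\<in>nbrs \<mu> x. \<mu> x y * \<bar>u y - u x\<bar> powr m)"
    using y(1) finite_nbrs[OF assms(1)] weighted_graph_nonneg[OF assms(1)]
    by (intro member_le_sum) auto
  finally show ?thesis .
qed

section \<open>The weighted energy estimate\<close>

definition edge_const :: "real \<Rightarrow> real \<Rightarrow> real \<Rightarrow> real \<Rightarrow> real \<Rightarrow> real"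
  where "edge_const p0 p1 m s t = sqrt (2 * p0) powr (m - 1) * real (nat \<lceil>s\<rceil>) * p1 powr t"

definition gain_const :: "real \<Rightarrow> real \<Rightarrow> real \<Rightarrow> real"
  where "gain_const p0 p1 t = t * p1 powr (-t - 1) / p0"

definition estimate_const ::
    "real \<Rightarrow> real \<Rightarrow> real \<Rightarrow> real \<Rightarrow> real \<Rightarrow> real \<Rightarrow> real \<Rightarrow> real \<Rightarrow> real"
  where "estimate_const p0 p1 m s t a b c = edge_const p0 p1 m s t *
    (b + c * (gain_const p0 p1 t / (2 * edge_const p0 p1 m s t * a)) powr (-a/c))"

lemma edge_const_pos: "1 < p0 \<Longrightarrow> 0 < p1 \<Longrightarrow> 0 < s \<Longrightarrow> 0 < edge_const p0 p1 m s t"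
  by (simp add: edge_const_def)

lemma gain_const_pos: "1 < p0 \<Longrightarrow> 0 < p1 \<Longrightarrow> 0 < t \<Longrightarrow> 0 < gain_const p0 p1 t"
  by (simp add: gain_const_def)

lemma estimate_const_pos:
  "1 < p0 \<Longrightarrow> 0 < p1 \<Longrightarrow> 0 < s \<Longrightarrow> 0 < t \<Longrightarrow> young_exponents m p q s t a b c \<theta>
    \<Longrightarrow> 0 < estimate_const p0 p1 m s t a b c"
  using edge_const_pos gain_const_pos
  by (simp add: estimate_const_def young_exponents_def add_pos_nonneg)

locale supersolution_with_cutoff =
  fixes V :: "nat set" and \<mu> :: "nat \<Rightarrow> nat \<Rightarrow> real" and \<Omega> :: "nat set"
    and u \<phi> :: "nat \<Rightarrow> real" and p0 p1 m p q s t :: real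
  assumes graph: "weighted_graph V \<mu>" and p0: "cond_p0 \<mu> p0"
    and u_pos: "\<forall>x\<in>V. 0 < u x"
    and supersolution: "\<forall>x\<in>\<Omega>. mlap m \<mu> u x + u x powr p * cpow (gradn \<mu> u x) q \<le> 0"
    and u_ratio: "\<forall>x y. adj \<mu> x y \<longrightarrow> 1 / p1 \<le> u x / u y \<and> u x / u y \<le> p1"
    and u_boundary: "\<forall>x\<in>\<Omega>. \<forall>y\<in>V - \<Omega>. adj \<mu> x y \<longrightarrow> u x \<le> u y"
    and \<phi>_range: "\<forall>x. 0 \<le> \<phi> x \<and> \<phi> x \<le> 1"
    and \<phi>_finite: "finite {x. \<phi> x \<noteq> 0}"
    and p1: "1 < p1" and m: "1 < m" and s: "0 < s" and t: "0 < t"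
begin

definition cutoff_support :: "nat set"
  where "cutoff_support = {x \<in> \<Omega>. \<phi> x \<noteq> 0}"

definition cutoff_edges :: "(nat \<times> nat) set"
  where "cutoff_edges = {(x, y). x \<in> \<Omega> \<and> y \<in> \<Omega> \<and> adj \<mu> x y \<and> \<phi> y - \<phi> x \<noteq> 0}"

definition energy :: real
  where "energy = (\<Sum>x\<in>cutoff_support. wdeg \<mu> x * u x powr (p - t) * cpow (gradn \<mu> u x) q * \<phi> x powr s)"

definition edge_energy :: real
  where "edge_energy =
    (\<Sum>(x, y)\<in>cutoff_edges. \<mu> x y * \<phi> x powr s * u x powr (p - t) * cpow (gradn \<mu> u x) q)"

definition cutoff_energy :: "real \<Rightarrow> real"
  where "cutoff_energy \<theta> = (\<Sum>(x, y)\<in>cutoff_edges. \<mu> x y * \<bar>\<phi> y - \<phi> x\<bar> powr \<theta>)"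

definition flux :: "nat \<Rightarrow> nat \<Rightarrow> real"
  where "flux x y = \<bar>u y - u x\<bar> powr (m - 2) * (u y - u x)"

definition test :: "nat \<Rightarrow> real"
  where "test x = \<phi> x powr s * u x powr -t"

text \<open>
  In the summation by parts over an edge, the gain comes from the monotonicity of u^(-t) and is
  a good term; the loss comes from the variation of \<phi>^s along the edge.
\<close>

definition gain :: "nat \<Rightarrow> nat \<Rightarrow> real"
  where "gain x y = \<mu> x y * \<bar>u y - u x\<bar> powr (m - 1) * \<bar>u y powr -t - u x powr -t\<bar> * \<phi> x powr s"

definition loss :: "nat \<Rightarrow> nat \<Rightarrow> real"
  where "loss x y = (if \<phi> y < \<phi> x
    then \<mu> x y * \<bar>u y - u x\<bar> powr (m - 1) * (\<phi> x powr s - \<phi> y powr s) * p1 powr t * u x powr -t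
    else 0)"

definition grad_term :: "nat \<Rightarrow> real"
  where "grad_term x = gradn \<mu> u x powr m * u x powr (-t - 1) * \<phi> x powr s"

definition inner_edges :: "(nat \<times> nat) set"
  where "inner_edges = {(x, y). x \<in> \<Omega> \<and> y \<in> \<Omega> \<and> adj \<mu> x y \<and> (\<phi> x \<noteq> 0 \<or> \<phi> y \<noteq> 0)}"

definition cutoff_nbrs :: "nat \<Rightarrow> nat set"
  where "cutoff_nbrs x = {y. (x, y) \<in> cutoff_edges}"

abbreviation "K \<equiv> edge_const p0 p1 m s t"

lemma \<mu>_nonneg: "0 \<le> \<mu> x y"
  using graph by (rule weighted_graph_nonneg)

lemma adj_sym: "adj \<mu> x y \<Longrightarrow> adj \<mu> y x"
  using graph by (rule weighted_graph_adj_sym)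

lemma u_pos_adj:
  assumes "adj \<mu> x y"
  shows "0 < u x" "0 < u y"
  using weighted_graph_adjD[OF graph assms] u_pos by auto

lemma u_le_ratio:
  assumes "adj \<mu> x y"
  shows "u y \<le> p1 * u x"
proof -
  have "1 / p1 \<le> u x / u y" using u_ratio assms by blast
  then show ?thesis using u_pos_adj[OF assms] p1 by (simp add: field_simps)
qed

lemma powr_neg_le_ratio:
  assumes "adj \<mu> x y"
  shows "u y powr -t \<le> p1 powr t * u x powr -t"
proof -
  have "u x / p1 \<le> u y"
    using u_le_ratio[OF adj_sym[OF assms]] p1 by (simp add: field_simps)
  then have "u y powr -t \<le> (u x / p1) powr -t"
    using u_pos_adj[OF assms] p1 t by (intro powr_mono2') auto
  also have "\<dots> = p1 powr t * u x powr -t"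
    using u_pos_adj[OF assms] p1 by (simp add: powr_divide powr_minus field_simps)
  finally show ?thesis .
qed

lemma \<phi>_powr_less_iff: "\<phi> y powr s < \<phi> x powr s \<longleftrightarrow> \<phi> y < \<phi> x"
  using \<phi>_range s by (metis not_less powr_less_mono2 powr_mono2 less_imp_le)

lemma \<phi>_nonneg: "0 \<le> \<phi> x"
  using \<phi>_range by blast

lemma test_nonneg: "0 \<le> test x"
  by (simp add: test_def)

lemma gain_nonneg: "0 \<le> gain x y"
  by (simp add: gain_def \<mu>_nonneg)

lemma grad_term_nonneg: "0 \<le> grad_term x"
  by (simp add: grad_term_def)

lemma finite_cutoff_support: "finite cutoff_support"
  using \<phi>_finite by (rule rev_finite_subset) (auto simp: cutoff_support_def)

lemma finite_inner_edges: "finite inner_edges"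
proof -
  define Q where "Q = Sigma cutoff_support (nbrs \<mu>)"
  have "finite Q"
    unfolding Q_def using finite_cutoff_support finite_nbrs[OF graph] by blast
  moreover have "inner_edges \<subseteq> Q \<union> prod.swap ` Q"
    by (auto simp: inner_edges_def Q_def cutoff_support_def image_iff intro: adj_sym)
  ultimately show ?thesis by (meson finite_UnI finite_imageI rev_finite_subset)
qed

lemma cutoff_edges_subset: "cutoff_edges \<subseteq> inner_edges"
  by (auto simp: cutoff_edges_def inner_edges_def)

lemma finite_cutoff_edges: "finite cutoff_edges"
  using finite_inner_edges cutoff_edges_subset by (rule rev_finite_subset)

lemma cutoff_nbrs_subset: "cutoff_nbrs x \<subseteq> nbrs \<mu> x"
  by (auto simp: cutoff_nbrs_def cutoff_edges_def)

lemma energy_term_le_flux: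
  assumes "x \<in> \<Omega>"
  shows "wdeg \<mu> x * u x powr (p - t) * cpow (gradn \<mu> u x) q * \<phi> x powr s
    \<le> - (\<Sum>y\<in>nbrs \<mu> x. \<mu> x y * flux x y) * test x"
proof -
  have "wdeg \<mu> x * (u x powr p * cpow (gradn \<mu> u x) q) \<le> wdeg \<mu> x * - mlap m \<mu> u x"
    using supersolution assms wdeg_nonneg[OF graph] by (intro mult_left_mono) auto
  also have "\<dots> = - (\<Sum>y\<in>nbrs \<mu> x. \<mu> x y * flux x y)"
    using wdeg_mult_mlap[OF graph] by (simp add: flux_def)
  finally have "wdeg \<mu> x * (u x powr p * cpow (gradn \<mu> u x) q) * test x
      \<le> - (\<Sum>y\<in>nbrs \<mu> x. \<mu> x y * flux x y) * test x"
    using test_nonneg by (rule mult_right_mono)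
  moreover have "u x powr (p - t) = u x powr p * u x powr -t"
    by (simp flip: powr_add)
  ultimately show ?thesis by (simp add: test_def algebra_simps)
qed

lemma boundary_flux_le_gain:
  assumes "x \<in> \<Omega>" "adj \<mu> x y" "y \<notin> \<Omega>"
  shows "- (\<mu> x y * flux x y) * test x \<le> - gain x y"
proof -
  have u: "0 < u x" "0 < u y" using u_pos_adj[OF assms(2)] by auto
  have "u x \<le> u y"
    using u_boundary assms weighted_graph_adjD[OF graph assms(2)] by auto
  then have flux: "flux x y = \<bar>u y - u x\<bar> powr (m - 1)"
    using abs_powr_mult_sgn[of "u y - u x" "m - 1"] by (cases "u x = u y") (auto simp: flux_def)
  have "u y powr -t \<le> u x powr -t"
    using \<open>u x \<le> u y\<close> u t by (intro powr_mono2') auto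
  then have "\<bar>u y powr -t - u x powr -t\<bar> \<le> u x powr -t" by simp
  then have "gain x y \<le> \<mu> x y * \<bar>u y - u x\<bar> powr (m - 1) * u x powr -t * \<phi> x powr s"
    unfolding gain_def using \<mu>_nonneg by (intro mult_right_mono mult_left_mono) auto
  also have "\<dots> = \<mu> x y * flux x y * test x"
    by (simp add: flux test_def algebra_simps)
  finally show ?thesis by simp
qed

lemma pair_flux_le:
  assumes "adj \<mu> x y"
  shows "- (\<mu> x y * flux x y) * test x + - (\<mu> y x * flux y x) * test y
    \<le> (loss x y - gain x y / 2) + (loss y x - gain y x / 2)"
proof -
  define H \<sigma> A B F1 F2 where "H = \<bar>u y - u x\<bar> powr (m - 1)" and "\<sigma> = sgn (u y - u x)"
    and "A = u x powr -t" and "B = u y powr -t" and "F1 = \<phi> x powr s" and "F2 = \<phi> y powr s"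
  have u: "0 < u x" "0 < u y" using u_pos_adj[OF assms] by auto
  have \<mu>: "\<mu> y x = \<mu> x y" using weighted_graph_sym[OF graph] by simp
  have "\<sigma> * (B - A) = - \<bar>B - A\<bar>"
  proof (cases "u x < u y")
    case True
    then have "B < A" using u t by (simp add: A_def B_def powr_less_mono2_neg)
    with True show ?thesis by (simp add: \<sigma>_def)
  next
    case False
    then have "A \<le> B" using u t by (simp add: A_def B_def powr_mono2')
    with False show ?thesis by (cases "u x = u y") (auto simp: \<sigma>_def A_def B_def)
  qed
  moreover have "B \<le> p1 powr t * A" "A \<le> p1 powr t * B"
    using powr_neg_le_ratio assms adj_sym by (auto simp: A_def B_def)
  moreover have "1 \<le> p1 powr t" using p1 t by (simp add: ge_one_powr_ge_zero)
  ultimately have bound: "\<mu> x y * H * \<sigma> * (F2 * B - F1 * A) \<le> - \<mu> x y * H * \<bar>B - A\<bar> * (F1 + F2) / 2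
      + (if F2 < F1 then \<mu> x y * H * (F1 - F2) * p1 powr t * A else 0)
      + (if F1 < F2 then \<mu> x y * H * (F2 - F1) * p1 powr t * B else 0)"
    by (intro pair_flux_bound) (auto simp: H_def \<sigma>_def A_def abs_sgn_eq \<mu>_nonneg)
  have "sgn (u x - u y) = - \<sigma>"
    unfolding \<sigma>_def by (metis minus_diff_eq sgn_minus)
  then have "flux x y = \<sigma> * H" "flux y x = - (\<sigma> * H)"
    using abs_powr_mult_sgn[of "u y - u x" "m - 1"] abs_powr_mult_sgn[of "u x - u y" "m - 1"]
    by (simp_all add: flux_def H_def \<sigma>_def abs_minus_commute)
  then have "- (\<mu> x y * flux x y) * test x + - (\<mu> y x * flux y x) * test y
      = \<mu> x y * H * \<sigma> * (F2 * B - F1 * A)"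
    by (simp add: \<mu> test_def A_def B_def F1_def F2_def algebra_simps)
  moreover have "loss x y = (if F2 < F1 then \<mu> x y * H * (F1 - F2) * p1 powr t * A else 0)"
    "loss y x = (if F1 < F2 then \<mu> x y * H * (F2 - F1) * p1 powr t * B else 0)"
    by (simp_all add: loss_def \<mu> H_def A_def B_def F1_def F2_def \<phi>_powr_less_iff abs_minus_commute)
  moreover have "gain x y + gain y x = \<mu> x y * H * \<bar>B - A\<bar> * (F1 + F2)"
    by (simp add: gain_def \<mu> H_def A_def B_def F1_def F2_def abs_minus_commute algebra_simps)
  ultimately show ?thesis using bound by simp
qed

lemma inner_flux_le:
  "(\<Sum>x\<in>cutoff_support. \<Sum>y\<in>nbrs \<mu> x \<inter> \<Omega>. - (\<mu> x y * flux x y) * test x)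
    \<le> (\<Sum>x\<in>cutoff_support. \<Sum>y\<in>nbrs \<mu> x \<inter> \<Omega>. loss x y - gain x y / 2)"
proof -
  have extend: "(\<Sum>x\<in>cutoff_support. \<Sum>y\<in>nbrs \<mu> x \<inter> \<Omega>. F x y) = (\<Sum>(x, y)\<in>inner_edges. F x y)"
    if "\<And>x y. \<phi> x = 0 \<Longrightarrow> F x y = 0" for F
    using that finite_inner_edges finite_cutoff_support finite_nbrs[OF graph]
    by (intro sum_Sigma_extend) (auto simp: inner_edges_def cutoff_support_def)
  have "(\<Sum>(x, y)\<in>inner_edges. - (\<mu> x y * flux x y) * test x)
      \<le> (\<Sum>(x, y)\<in>inner_edges. loss x y - gain x y / 2)"
  proof (rule sum_swap_le)
    fix x y assume "(x, y) \<in> inner_edges"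
    then have "adj \<mu> x y" by (simp add: inner_edges_def)
    then show "- (\<mu> x y * flux x y) * test x + - (\<mu> y x * flux y x) * test y
        \<le> loss x y - gain x y / 2 + (loss y x - gain y x / 2)"
      by (rule pair_flux_le)
  qed (simp add: finite_inner_edges, auto simp: inner_edges_def adj_sym)
  moreover have "loss x y = 0" "gain x y = 0" "test x = 0" if "\<phi> x = 0" for x y
    using that \<phi>_nonneg[of y] by (auto simp: loss_def gain_def test_def)
  ultimately show ?thesis by (simp add: extend)
qed

lemma energy_le_loss_gain:
  "energy \<le> (\<Sum>x\<in>cutoff_support. (\<Sum>y\<in>nbrs \<mu> x \<inter> \<Omega>. loss x y) - (\<Sum>y\<in>nbrs \<mu> x. gain x y) / 2)"
proof -
  have split: "(\<Sum>y\<in>nbrs \<mu> x. F y) = (\<Sum>y\<in>nbrs \<mu> x \<inter> \<Omega>. F y) + (\<Sum>y\<in>nbrs \<mu> x - \<Omega>. F y)"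
    for x and F :: "nat \<Rightarrow> real"
    using finite_nbrs[OF graph] by (rule sum.Int_Diff)
  have "energy \<le> (\<Sum>x\<in>cutoff_support. - (\<Sum>y\<in>nbrs \<mu> x. \<mu> x y * flux x y) * test x)"
    unfolding energy_def by (intro sum_mono energy_term_le_flux) (simp add: cutoff_support_def)
  also have "\<dots> = (\<Sum>x\<in>cutoff_support. \<Sum>y\<in>nbrs \<mu> x \<inter> \<Omega>. - (\<mu> x y * flux x y) * test x)
      + (\<Sum>x\<in>cutoff_support. \<Sum>y\<in>nbrs \<mu> x - \<Omega>. - (\<mu> x y * flux x y) * test x)"
  proof -
    have "- (\<Sum>y\<in>nbrs \<mu> x. \<mu> x y * flux x y) * test x
        = (\<Sum>y\<in>nbrs \<mu> x \<inter> \<Omega>. - (\<mu> x y * flux x y) * test x)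
          + (\<Sum>y\<in>nbrs \<mu> x - \<Omega>. - (\<mu> x y * flux x y) * test x)" for x
      by (simp add: split sum_distrib_right sum_negf left_diff_distrib)
    then show ?thesis by (simp add: sum.distrib)
  qed
  also have "\<dots> \<le> (\<Sum>x\<in>cutoff_support. \<Sum>y\<in>nbrs \<mu> x \<inter> \<Omega>. loss x y - gain x y / 2)
      + (\<Sum>x\<in>cutoff_support. \<Sum>y\<in>nbrs \<mu> x - \<Omega>. - gain x y)"
    by (intro add_mono inner_flux_le sum_mono boundary_flux_le_gain) (auto simp: cutoff_support_def)
  also have "\<dots> \<le> (\<Sum>x\<in>cutoff_support. (\<Sum>y\<in>nbrs \<mu> x \<inter> \<Omega>. loss x y) - (\<Sum>y\<in>nbrs \<mu> x. gain x y) / 2)"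
  proof -
    have "(\<Sum>y\<in>nbrs \<mu> x \<inter> \<Omega>. loss x y - gain x y / 2) + (\<Sum>y\<in>nbrs \<mu> x - \<Omega>. - gain x y)
        \<le> (\<Sum>y\<in>nbrs \<mu> x \<inter> \<Omega>. loss x y) - (\<Sum>y\<in>nbrs \<mu> x. gain x y) / 2" for x
    proof -
      have "0 \<le> (\<Sum>y\<in>nbrs \<mu> x - \<Omega>. gain x y)"
        by (simp add: sum_nonneg gain_nonneg)
      then show ?thesis
        unfolding split[where x=x and F="gain x"]
        by (simp add: sum_subtractf sum_negf flip: sum_divide_distrib) (simp add: field_simps)
    qed
    then show ?thesis by (simp add: sum.distrib[symmetric] sum_mono)
  qed
  finally show ?thesis .
qed

lemma gain_lower_bound:
  "gain_const p0 p1 t * wdeg \<mu> x * grad_term x \<le> (\<Sum>y\<in>nbrs \<mu> x. gain x y)"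
proof -
  define c where "c = t * p1 powr (-t - 1)"
  have c: "0 \<le> c" using t by (simp add: c_def)
  have edge: "c * u x powr (-t - 1) * \<phi> x powr s * (\<mu> x y * \<bar>u y - u x\<bar> powr m) \<le> gain x y"
    if "adj \<mu> x y" for y
  proof -
    have "c * \<bar>u y - u x\<bar> * u x powr (-t - 1) \<le> \<bar>u y powr -t - u x powr -t\<bar>"
      using abs_diff_powr_neg_ge[of "u x" "u y" p1 t] u_pos_adj[OF that] u_le_ratio[OF that] p1 t
      by (simp add: c_def)
    have "\<bar>u y - u x\<bar> powr m = \<bar>u y - u x\<bar> powr (m - 1) * \<bar>u y - u x\<bar>"
      using powr_mult_base[of "\<bar>u y - u x\<bar>" "m - 1"] by (simp add: mult.commute)
    then have "c * u x powr (-t - 1) * \<phi> x powr s * (\<mu> x y * \<bar>u y - u x\<bar> powr m)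
        = \<mu> x y * \<bar>u y - u x\<bar> powr (m - 1) * \<phi> x powr s * (c * \<bar>u y - u x\<bar> * u x powr (-t - 1))"
      by (simp add: algebra_simps)
    also have "\<dots> \<le> \<mu> x y * \<bar>u y - u x\<bar> powr (m - 1) * \<phi> x powr s * \<bar>u y powr -t - u x powr -t\<bar>"
      using \<open>c * \<bar>u y - u x\<bar> * u x powr (-t - 1) \<le> _\<close> by (intro mult_left_mono) (simp_all add: \<mu>_nonneg)
    finally show ?thesis
      by (simp add: gain_def algebra_simps)
  qed
  have "gain_const p0 p1 t * wdeg \<mu> x * grad_term x
      = c * u x powr (-t - 1) * \<phi> x powr s * (wdeg \<mu> x / p0 * gradn \<mu> u x powr m)"
    by (simp add: gain_const_def grad_term_def c_def)
  also have "\<dots> \<le> c * u x powr (-t - 1) * \<phi> x powr s * (\<Sum>y\<in>nbrs \<mu> x. \<mu> x y * \<bar>u y - u x\<bar> powr m)"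
    using c m by (intro mult_left_mono wdeg_gradn_powr_le[OF graph p0]) auto
  also have "\<dots> \<le> (\<Sum>y\<in>nbrs \<mu> x. gain x y)"
    unfolding sum_distrib_left using edge by (intro sum_mono) auto
  finally show ?thesis .
qed

lemma loss_le:
  assumes "adj \<mu> x y" "1 \<le> s * c"
  shows "loss x y
    \<le> K * \<mu> x y * (gradn \<mu> u x powr (m - 1) * u x powr -t * \<phi> x powr (s * (1 - c)) * \<bar>\<phi> y - \<phi> x\<bar>)"
proof (cases "\<phi> y < \<phi> x")
  case True
  have "\<bar>u y - u x\<bar> powr (m - 1) \<le> (sqrt (2 * p0) * gradn \<mu> u x) powr (m - 1)"
    using abs_diff_le_gradn[OF graph p0 assms(1)] m by (intro powr_mono2) auto
  also have "\<dots> = sqrt (2 * p0) powr (m - 1) * gradn \<mu> u x powr (m - 1)"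
    using gradn_nonneg[OF graph] by (simp add: powr_mult)
  finally have du: "\<bar>u y - u x\<bar> powr (m - 1) \<le> sqrt (2 * p0) powr (m - 1) * gradn \<mu> u x powr (m - 1)" .
  have "\<phi> x powr (s - 1) \<le> \<phi> x powr (s * (1 - c))"
    using assms(2) \<phi>_range by (intro powr_mono') (auto simp: algebra_simps)
  then have "\<phi> x powr s - \<phi> y powr s \<le> real (nat \<lceil>s\<rceil>) * \<phi> x powr (s * (1 - c)) * \<bar>\<phi> y - \<phi> x\<bar>"
    using powr_diff_le_ceiling[of "\<phi> y" "\<phi> x" s] True \<phi>_range s
    by (smt (verit) mult_left_mono mult_right_mono of_nat_0_le_iff)
  with du have "\<bar>u y - u x\<bar> powr (m - 1) * (\<phi> x powr s - \<phi> y powr s)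
      \<le> (sqrt (2 * p0) powr (m - 1) * gradn \<mu> u x powr (m - 1))
        * (real (nat \<lceil>s\<rceil>) * \<phi> x powr (s * (1 - c)) * \<bar>\<phi> y - \<phi> x\<bar>)"
    using True \<phi>_powr_less_iff[of y x] by (intro mult_mono) auto
  then have "\<mu> x y * (\<bar>u y - u x\<bar> powr (m - 1) * (\<phi> x powr s - \<phi> y powr s)) * (p1 powr t * u x powr -t)
      \<le> \<mu> x y * ((sqrt (2 * p0) powr (m - 1) * gradn \<mu> u x powr (m - 1))
        * (real (nat \<lceil>s\<rceil>) * \<phi> x powr (s * (1 - c)) * \<bar>\<phi> y - \<phi> x\<bar>)) * (p1 powr t * u x powr -t)"
    by (intro mult_right_mono mult_left_mono) (simp_all add: \<mu>_nonneg)
  then show ?thesis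
    using True by (simp add: loss_def edge_const_def algebra_simps)
next
  case False
  then show ?thesis
    using gradn_nonneg[OF graph] p1 s
    by (simp add: loss_def edge_const_def \<mu>_nonneg)
qed

lemma K_pos: "0 < K"
  using p0 p1 s by (intro edge_const_pos) (auto simp: cond_p0_def)

lemma loss_le_young:
  assumes Y: "young_exponents m p q s t a b c \<theta>" and e: "0 < e" and \<kappa>: "0 < \<kappa>" and "adj \<mu> x y"
  shows "loss x y \<le> K * (a * e * \<mu> x y * grad_term x
    + b * \<kappa> * (\<mu> x y * \<phi> x powr s * u x powr (p - t) * cpow (gradn \<mu> u x) q)
    + c * e powr (-a/c) * \<kappa> powr (-b/c) * (\<mu> x y * \<bar>\<phi> y - \<phi> x\<bar> powr \<theta>))"
proof (cases "\<phi> y < \<phi> x \<and> 0 < gradn \<mu> u x")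
  case True
  have abc: "0 < a" "0 < b" "0 < c" "1 \<le> s * c" using Y by (auto simp: young_exponents_def)
  have "loss x y
      \<le> K * \<mu> x y * (gradn \<mu> u x powr (m - 1) * u x powr -t * \<phi> x powr (s * (1 - c)) * \<bar>\<phi> y - \<phi> x\<bar>)"
    using assms(4) abc(4) by (rule loss_le)
  also have "\<dots> \<le> K * \<mu> x y * (a * e * (gradn \<mu> u x powr m * u x powr (-t - 1) * \<phi> x powr s)
      + b * \<kappa> * (\<phi> x powr s * u x powr (p - t) * gradn \<mu> u x powr q)
      + c * e powr (-a/c) * \<kappa> powr (-b/c) * \<bar>\<phi> y - \<phi> x\<bar> powr \<theta>)"
    using True u_pos_adj[OF assms(4)] \<phi>_nonneg[of y] K_pos \<mu>_nonneg
    by (intro mult_left_mono young_exponents_product_le[OF Y e \<kappa>]) auto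
  also have "\<dots> = K * (a * e * \<mu> x y * grad_term x
      + b * \<kappa> * (\<mu> x y * \<phi> x powr s * u x powr (p - t) * cpow (gradn \<mu> u x) q)
      + c * e powr (-a/c) * \<kappa> powr (-b/c) * (\<mu> x y * \<bar>\<phi> y - \<phi> x\<bar> powr \<theta>))"
    using True by (simp add: grad_term_def cpow_pos algebra_simps)
  finally show ?thesis .
next
  case False
  have abc: "0 < a" "0 < b" "0 < c" "1 \<le> s * c" using Y by (auto simp: young_exponents_def)
  have "loss x y \<le> 0"
    using False loss_le[OF assms(4) abc(4)] gradn_nonneg[OF graph, of u x] by (auto simp: loss_def)
  also have "0 \<le> K * (a * e * \<mu> x y * grad_term x
      + b * \<kappa> * (\<mu> x y * \<phi> x powr s * u x powr (p - t) * cpow (gradn \<mu> u x) q)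
      + c * e powr (-a/c) * \<kappa> powr (-b/c) * (\<mu> x y * \<bar>\<phi> y - \<phi> x\<bar> powr \<theta>))"
    using abc e \<kappa> K_pos \<mu>_nonneg grad_term_nonneg cpow_nonneg[OF gradn_nonneg[OF graph]]
    by (intro mult_nonneg_nonneg add_nonneg_nonneg) auto
  finally show ?thesis .
qed

lemma sum_loss_le:
  assumes Y: "young_exponents m p q s t a b c \<theta>" and \<kappa>: "0 < \<kappa>" and x: "x \<in> \<Omega>"
  defines "e \<equiv> gain_const p0 p1 t / (2 * K * a)"
  \<comment> \<open>chosen so that the gradient part of the losses is half of the bound in \<open>gain_lower_bound\<close>\<close>
  shows "(\<Sum>y\<in>nbrs \<mu> x \<inter> \<Omega>. loss x y) \<le> gain_const p0 p1 t / 2 * wdeg \<mu> x * grad_term x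
    + K * b * \<kappa> * (\<Sum>y\<in>cutoff_nbrs x. \<mu> x y * \<phi> x powr s * u x powr (p - t) * cpow (gradn \<mu> u x) q)
    + K * c * e powr (-a/c) * \<kappa> powr (-b/c) * (\<Sum>y\<in>cutoff_nbrs x. \<mu> x y * \<bar>\<phi> y - \<phi> x\<bar> powr \<theta>)"
proof -
  have a: "0 < a" using Y by (simp add: young_exponents_def)
  have e: "0 < e"
    unfolding e_def using a K_pos gain_const_pos p0 p1 t by (auto simp: cond_p0_def)
  have "(\<Sum>y\<in>nbrs \<mu> x \<inter> \<Omega>. loss x y) = (\<Sum>y\<in>cutoff_nbrs x. loss x y)"
    using x finite_nbrs[OF graph]
    by (intro sum.mono_neutral_right) (auto simp: cutoff_nbrs_def cutoff_edges_def loss_def)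
  also have "\<dots> \<le> (\<Sum>y\<in>cutoff_nbrs x. K * (a * e * \<mu> x y * grad_term x
      + b * \<kappa> * (\<mu> x y * \<phi> x powr s * u x powr (p - t) * cpow (gradn \<mu> u x) q)
      + c * e powr (-a/c) * \<kappa> powr (-b/c) * (\<mu> x y * \<bar>\<phi> y - \<phi> x\<bar> powr \<theta>)))"
    by (intro sum_mono loss_le_young[OF Y e \<kappa>]) (auto simp: cutoff_nbrs_def cutoff_edges_def)
  also have "\<dots> = K * a * e * grad_term x * (\<Sum>y\<in>cutoff_nbrs x. \<mu> x y)
      + K * b * \<kappa> * (\<Sum>y\<in>cutoff_nbrs x. \<mu> x y * \<phi> x powr s * u x powr (p - t) * cpow (gradn \<mu> u x) q)
      + K * c * e powr (-a/c) * \<kappa> powr (-b/c) * (\<Sum>y\<in>cutoff_nbrs x. \<mu> x y * \<bar>\<phi> y - \<phi> x\<bar> powr \<theta>)"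
    by (simp add: sum.distrib sum_distrib_left sum_distrib_right algebra_simps)
  also have "K * a * e * grad_term x * (\<Sum>y\<in>cutoff_nbrs x. \<mu> x y)
      \<le> gain_const p0 p1 t / 2 * wdeg \<mu> x * grad_term x"
  proof -
    have "K * a * e = gain_const p0 p1 t / 2"
      using K_pos a by (simp add: e_def)
    then have "K * a * e * grad_term x * (\<Sum>y\<in>cutoff_nbrs x. \<mu> x y)
        = gain_const p0 p1 t / 2 * grad_term x * (\<Sum>y\<in>cutoff_nbrs x. \<mu> x y)"
      by simp
    also have "\<dots> \<le> gain_const p0 p1 t / 2 * grad_term x * wdeg \<mu> x"
      using gain_const_pos[of p0 p1 t] p0 p1 t grad_term_nonneg[of x]
        sum_nbrs_le_wdeg[OF graph cutoff_nbrs_subset]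
      by (intro mult_left_mono) (auto simp: cond_p0_def)
    finally show ?thesis by (simp add: mult_ac)
  qed
  finally show ?thesis by simp
qed

lemma edge_energy_eq:
  "edge_energy = (\<Sum>x\<in>cutoff_support. \<Sum>y\<in>cutoff_nbrs x.
    \<mu> x y * \<phi> x powr s * u x powr (p - t) * cpow (gradn \<mu> u x) q)"
  unfolding edge_energy_def
  using finite_cutoff_edges finite_cutoff_support finite_nbrs[OF graph] cutoff_nbrs_subset
  by (intro sum_Sigma_extend[symmetric])
     (auto simp: cutoff_support_def cutoff_nbrs_def cutoff_edges_def intro: rev_finite_subset)

lemma cutoff_energy_ge:
  "(\<Sum>x\<in>cutoff_support. \<Sum>y\<in>cutoff_nbrs x. \<mu> x y * \<bar>\<phi> y - \<phi> x\<bar> powr \<theta>) \<le> cutoff_energy \<theta>"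
proof -
  have "(\<Sum>x\<in>cutoff_support. \<Sum>y\<in>cutoff_nbrs x. \<mu> x y * \<bar>\<phi> y - \<phi> x\<bar> powr \<theta>)
      = (\<Sum>(x, y)\<in>Sigma cutoff_support cutoff_nbrs. \<mu> x y * \<bar>\<phi> y - \<phi> x\<bar> powr \<theta>)"
    using finite_cutoff_support finite_nbrs[OF graph] cutoff_nbrs_subset
    by (intro sum.Sigma) (auto intro: rev_finite_subset)
  also have "\<dots> \<le> cutoff_energy \<theta>"
    unfolding cutoff_energy_def using finite_cutoff_edges \<mu>_nonneg
    by (intro sum_mono2) (auto simp: cutoff_nbrs_def)
  finally show ?thesis .
qed

lemma edge_energy_le_energy: "edge_energy \<le> energy"
  unfolding edge_energy_eq energy_def
proof (rule sum_mono)
  fix x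
  have "(\<Sum>y\<in>cutoff_nbrs x. \<mu> x y * \<phi> x powr s * u x powr (p - t) * cpow (gradn \<mu> u x) q)
      = (\<Sum>y\<in>cutoff_nbrs x. \<mu> x y) * (\<phi> x powr s * u x powr (p - t) * cpow (gradn \<mu> u x) q)"
    by (simp add: sum_distrib_right mult.assoc)
  also have "\<dots> \<le> wdeg \<mu> x * (\<phi> x powr s * u x powr (p - t) * cpow (gradn \<mu> u x) q)"
    using sum_nbrs_le_wdeg[OF graph cutoff_nbrs_subset] cpow_nonneg[OF gradn_nonneg[OF graph]]
    by (intro mult_right_mono) auto
  finally show "(\<Sum>y\<in>cutoff_nbrs x. \<mu> x y * \<phi> x powr s * u x powr (p - t) * cpow (gradn \<mu> u x) q)
      \<le> wdeg \<mu> x * u x powr (p - t) * cpow (gradn \<mu> u x) q * \<phi> x powr s"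
    by (simp add: mult_ac)
qed

lemma energy_le_scaled:
  assumes Y: "young_exponents m p q s t a b c \<theta>" and \<kappa>: "0 < \<kappa>"
  defines "e \<equiv> gain_const p0 p1 t / (2 * K * a)"
  shows "energy \<le> K * b * \<kappa> * edge_energy + K * c * e powr (-a/c) * \<kappa> powr (-b/c) * cutoff_energy \<theta>"
proof -
  define A B where "A x = (\<Sum>y\<in>cutoff_nbrs x. \<mu> x y * \<phi> x powr s * u x powr (p - t) * cpow (gradn \<mu> u x) q)"
    and "B x = (\<Sum>y\<in>cutoff_nbrs x. \<mu> x y * \<bar>\<phi> y - \<phi> x\<bar> powr \<theta>)" for x
  have "energy \<le> (\<Sum>x\<in>cutoff_support. (\<Sum>y\<in>nbrs \<mu> x \<inter> \<Omega>. loss x y) - (\<Sum>y\<in>nbrs \<mu> x. gain x y) / 2)"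
    by (rule energy_le_loss_gain)
  also have "\<dots> \<le> (\<Sum>x\<in>cutoff_support. K * b * \<kappa> * A x + K * c * e powr (-a/c) * \<kappa> powr (-b/c) * B x)"
  proof (rule sum_mono)
    fix x assume "x \<in> cutoff_support"
    then show "(\<Sum>y\<in>nbrs \<mu> x \<inter> \<Omega>. loss x y) - (\<Sum>y\<in>nbrs \<mu> x. gain x y) / 2
        \<le> K * b * \<kappa> * A x + K * c * e powr (-a/c) * \<kappa> powr (-b/c) * B x"
      using sum_loss_le[OF Y \<kappa>, of x] gain_lower_bound[of x]
      by (simp add: cutoff_support_def A_def B_def e_def)
  qed
  also have "\<dots> = K * b * \<kappa> * edge_energy
      + K * c * e powr (-a/c) * \<kappa> powr (-b/c) * (\<Sum>x\<in>cutoff_support. B x)"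
    by (simp add: edge_energy_eq A_def sum.distrib sum_distrib_left)
  also have "\<dots> \<le> K * b * \<kappa> * edge_energy + K * c * e powr (-a/c) * \<kappa> powr (-b/c) * cutoff_energy \<theta>"
    using cutoff_energy_ge[of \<theta>] K_pos Y \<kappa> unfolding B_def
    by (intro add_left_mono mult_left_mono) (auto simp: young_exponents_def)
  finally show ?thesis .
qed

theorem energy_estimates:
  assumes Y: "young_exponents m p q s t a b c \<theta>"
  defines "C \<equiv> estimate_const p0 p1 m s t a b c"
  shows "energy \<le> C * edge_energy powr (b / (b + c)) * cutoff_energy \<theta> powr (c / (b + c))"
    and "energy \<le> C powr ((b + c) / c) * cutoff_energy \<theta>"
proof -
  have abc: "0 < a" "0 < b" "0 < c" using Y by (auto simp: young_exponents_def)
  define e where "e = gain_const p0 p1 t / (2 * K * a)"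
  have C: "C = K * b + K * c * e powr (-a/c)"
    by (simp add: C_def estimate_const_def e_def algebra_simps)
  have "0 < e"
    unfolding e_def using abc K_pos gain_const_pos p0 p1 t by (auto simp: cond_p0_def)
  then have P: "0 < K * b" "0 < K * c * e powr (-a/c)" using K_pos abc by simp_all
  have edge: "0 \<le> edge_energy"
    by (simp add: edge_energy_eq sum_nonneg \<mu>_nonneg cpow_nonneg gradn_nonneg[OF graph])
  have cutoff: "0 \<le> cutoff_energy \<theta>"
    by (simp add: cutoff_energy_def sum_nonneg \<mu>_nonneg split_def)
  show first: "energy \<le> C * edge_energy powr (b / (b + c)) * cutoff_energy \<theta> powr (c / (b + c))"
    unfolding C using edge cutoff abc(2,3)
    by (rule le_optimal_scaling) (use energy_le_scaled[OF Y] in \<open>simp add: e_def\<close>)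
  have \<alpha>: "0 < b / (b + c)" "b / (b + c) < 1"
    "c / (b + c) = 1 - b / (b + c)" "(b + c) / c = 1 / (1 - b / (b + c))"
    using abc by (simp_all add: field_simps)
  from first have "energy \<le> C * edge_energy powr (b / (b + c)) * cutoff_energy \<theta> powr (1 - b / (b + c))"
    unfolding \<alpha>(3) .
  then show "energy \<le> C powr ((b + c) / c) * cutoff_energy \<theta>"
    unfolding \<alpha>(4) using P by (intro absorb_interpolation_bound[OF edge edge_energy_le_energy cutoff _ \<alpha>(1,2)])
      (simp_all add: C)
qed

end

theorem mainTheorem14:
  fixes p0 p1 m p q s t :: real
  assumes "p0 > 1" and "m > 1" and "p + q \<noteq> m - 1" and "p1 > 1"
    and "s > 0" and "t > 0"
    and "(m * p + q + t * (q - m)) / ((m - 1) * p + t * (q - m + 1)) > 1"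
    and "(p + q - t) / (m - 1 - t) > 1"
    and "s > (m * p + q + t * (q - m)) / (p + q - m + 1)"
  shows "\<exists>C>0. \<exists>C'>0. \<forall>(V::nat set) \<mu> \<Omega> (u::nat \<Rightarrow> real).
     weighted_graph V \<mu> \<and> cond_p0 \<mu> p0 \<and>
     \<Omega> \<subseteq> V \<and> \<Omega> \<noteq> {} \<and>
     (\<forall>x\<in>V. u x > 0) \<and> (\<exists>x\<in>V. \<exists>y\<in>V. u x \<noteq> u y) \<and>
     (\<forall>x\<in>\<Omega>. (q < 0 \<longrightarrow> gradn \<mu> u x > 0) \<and>
        mlap m \<mu> u x + u x powr p * cpow (gradn \<mu> u x) q \<le> 0) \<and>
     (\<forall>x y. adj \<mu> x y \<longrightarrow> 1 / p1 \<le> u x / u y \<and> u x / u y \<le> p1) \<and>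
     (\<Omega> \<noteq> V \<longrightarrow> (\<forall>x\<in>\<Omega>. \<forall>y\<in>V - \<Omega>. adj \<mu> x y \<longrightarrow> u y \<ge> u x))
   \<longrightarrow> (\<forall>\<phi>::nat \<Rightarrow> real.
         (\<forall>x. 0 \<le> \<phi> x \<and> \<phi> x \<le> 1) \<and> finite {x. \<phi> x \<noteq> 0} \<and> {x. \<phi> x \<noteq> 0} \<subseteq> \<Omega>
       \<longrightarrow> (let \<theta> = (m * p + q + t * (q - m)) / (p + q - m + 1);
                L = (\<Sum>x\<in>{x\<in>\<Omega>. \<phi> x \<noteq> 0}.
                       wdeg \<mu> x * u x powr (p - t) * cpow (gradn \<mu> u x) q * \<phi> x powr s);
                E = {(x, y). x \<in> \<Omega> \<and> y \<in> \<Omega> \<and> adj \<mu> x y \<and> \<phi> y - \<phi> x \<noteq> 0};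
                A = (\<Sum>(x, y)\<in>E. \<mu> x y * \<phi> x powr s * u x powr (p - t) * cpow (gradn \<mu> u x) q);
                B = (\<Sum>(x, y)\<in>E. \<mu> x y * \<bar>\<phi> y - \<phi> x\<bar> powr \<theta>)
            in L \<le> C * A powr ((m - 1 - t) / (p + q - t)) * B powr ((p + q - m + 1) / (p + q - t))
             \<and> L \<le> C' * B))"
proof -
  obtain a b c where Y: "young_exponents m p q s t a b c ((m * p + q + t * (q - m)) / (p + q - m + 1))"
    and \<alpha>: "(m - 1 - t) / (p + q - t) = b / (b + c)"
    and \<beta>: "(p + q - m + 1) / (p + q - t) = c / (b + c)"
    using young_exponents_exist assms(7-9) by blast
  define C where "C = estimate_const p0 p1 m s t a b c"
  have C: "0 < C"
    unfolding C_def using estimate_const_pos[OF assms(1) _ assms(5,6) Y] assms(4) by simp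
  show ?thesis
    unfolding Let_def \<alpha> \<beta>
  proof (rule exI[of _ C], rule conjI[OF C], rule exI[of _ "C powr ((b + c) / c)"],
      rule conjI, use C in simp, intro allI impI, goal_cases)
    case (1 V \<mu> \<Omega> u \<phi>)
    then interpret supersolution_with_cutoff V \<mu> \<Omega> u \<phi> p0 p1 m p q s t
      using assms by unfold_locales auto
    show ?case
      using energy_estimates[OF Y, folded C_def] unfolding energy_def edge_energy_def
        cutoff_energy_def cutoff_support_def cutoff_edges_def by blast
  qed
qed

end
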